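(* Let $X$ be a countable $P$-space. Then $\Sigma\mathcal O(X)$ is sober.
   Context: $\mathcal O(X)$ is the lattice of open subsets of $X$ ordered by inclusion, and $\Sigma\mathcal O(X)$ is this lattice with its Scott topology (a set $U$ is Scott open iff it is an upper set and for every directed $D$, $\bigvee D\in U$ implies $D\cap U\neq\emptyset$). A space is a $P$-space if countable intersections of open sets are open. A $T_0$ space is sober if every irreducible closed set equals $\overline{\{x\}}$ for some point $x$. *)

theory Defs
  imports "HOL-Analysis.Analysis"
begin

definition p_space :: "'a topology \<Rightarrow> bool" where
  "p_space X \<longleftrightarrow>
     (\<forall>F. countable F \<and> F \<noteq> {} \<and> (\<forall>U\<in>F. openin X U) \<longrightarrow> openin X (\<Inter>F))"

definition opens :: "'a topology \<Rightarrow> 'a set set" where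
  "opens X = {U. openin X U}"

text \<open>Directed subsets of O(X): nonempty, every two members have an upper bound in the set.
  The join of such a family in O(X) is its union.\<close>
definition directed_opens :: "'a topology \<Rightarrow> 'a set set \<Rightarrow> bool" where
  "directed_opens X D \<longleftrightarrow> D \<subseteq> opens X \<and> D \<noteq> {} \<and>
     (\<forall>A\<in>D. \<forall>B\<in>D. \<exists>C\<in>D. A \<subseteq> C \<and> B \<subseteq> C)"

definition scott_open :: "'a topology \<Rightarrow> 'a set set \<Rightarrow> bool" where
  "scott_open X S \<longleftrightarrow> S \<subseteq> opens X \<and>
     (\<forall>U V. U \<in> S \<and> V \<in> opens X \<and> U \<subseteq> V \<longrightarrow> V \<in> S) \<and>
     (\<forall>D. directed_opens X D \<and> \<Union>D \<in> S \<longrightarrow> D \<inter> S \<noteq> {})"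

lemma scott_openD:
  assumes "scott_open X S"
  shows "S \<subseteq> opens X"
    and "\<And>U V. U \<in> S \<Longrightarrow> V \<in> opens X \<Longrightarrow> U \<subseteq> V \<Longrightarrow> V \<in> S"
    and "\<And>D. directed_opens X D \<Longrightarrow> \<Union>D \<in> S \<Longrightarrow> \<exists>A\<in>D. A \<in> S"
  using assms unfolding scott_open_def by blast+

lemma scott_open_Int:
  assumes s: "scott_open X S" and t: "scott_open X T"
  shows "scott_open X (S \<inter> T)"
proof -
  have "\<exists>C\<in>D. C \<in> S \<inter> T" if d: "directed_opens X D" and u: "\<Union>D \<in> S \<inter> T" for D
  proof -
    obtain A where A: "A \<in> D" "A \<in> S" using scott_openD(3)[OF s d] u by blast
    obtain B where B: "B \<in> D" "B \<in> T" using scott_openD(3)[OF t d] u by blast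
    obtain C where C: "C \<in> D" "A \<subseteq> C" "B \<subseteq> C"
      using d A(1) B(1) unfolding directed_opens_def by blast
    have Co: "C \<in> opens X" using d C(1) unfolding directed_opens_def by auto
    have "C \<in> S" using scott_openD(2)[OF s A(2) Co C(2)] .
    moreover have "C \<in> T" using scott_openD(2)[OF t B(2) Co C(3)] .
    ultimately show ?thesis using C(1) by blast
  qed
  moreover have "S \<inter> T \<subseteq> opens X" using scott_openD(1)[OF s] by blast
  moreover have "V \<in> S \<inter> T" if "U \<in> S \<inter> T" "V \<in> opens X" "U \<subseteq> V" for U V
    using that scott_openD(2)[OF s] scott_openD(2)[OF t] by blast
  ultimately show ?thesis unfolding scott_open_def by blast
qed

lemma scott_open_Union:
  assumes k: "\<And>S. S \<in> K \<Longrightarrow> scott_open X S"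
  shows "scott_open X (\<Union>K)"
proof -
  have "\<exists>C\<in>D. C \<in> \<Union>K" if d: "directed_opens X D" and u: "\<Union>D \<in> \<Union>K" for D
  proof -
    obtain S where S: "S \<in> K" "\<Union>D \<in> S" using u by blast
    obtain A where "A \<in> D" "A \<in> S" using scott_openD(3)[OF k[OF S(1)] d S(2)] by blast
    then show ?thesis using S(1) by blast
  qed
  moreover have "\<Union>K \<subseteq> opens X" using scott_openD(1)[OF k] by blast
  moreover have "V \<in> \<Union>K" if h: "U \<in> \<Union>K" "V \<in> opens X" "U \<subseteq> V" for U V
  proof -
    obtain S where "S \<in> K" "U \<in> S" using h(1) by blast
    then show ?thesis using scott_openD(2)[OF k[of S]] h by blast
  qed
  ultimately show ?thesis unfolding scott_open_def by blast
qed

lemma istopology_scott_open: "istopology (scott_open X)"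
  unfolding istopology_def using scott_open_Int scott_open_Union by blast

text \<open>\<Sigma>O(X): O(X) with the Scott topology.\<close>
definition scott_opens :: "'a topology \<Rightarrow> 'a set topology" where
  "scott_opens X = topology (scott_open X)"

lemma openin_scott_opens: "openin (scott_opens X) S \<longleftrightarrow> scott_open X S"
  unfolding scott_opens_def by (simp add: topology_inverse'[OF istopology_scott_open])

definition irreducible_closed :: "'b topology \<Rightarrow> 'b set \<Rightarrow> bool" where
  "irreducible_closed T C \<longleftrightarrow> closedin T C \<and> C \<noteq> {} \<and>
     (\<forall>A B. closedin T A \<and> closedin T B \<and> C \<subseteq> A \<union> B \<longrightarrow> C \<subseteq> A \<or> C \<subseteq> B)"

definition sober :: "'b topology \<Rightarrow> bool" where
  "sober T \<longleftrightarrow> t0_space T \<and>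
     (\<forall>C. irreducible_closed T C \<longrightarrow> (\<exists>x\<in>topspace T. C = T closure_of {x}))"

end

theory Submission
  imports Defs
begin

text \<open>In a countable P-space every intersection of open sets is already a countable one, so
  the space is Alexandrov. For an irreducible Scott-closed set \<open>C\<close> of opens, irreducibility
  applied to the Scott-open filters \<open>{V. F \<subseteq> V}\<close> (\<open>F\<close> finite, hence compact) shows that every
  finite \<open>F \<subseteq> \<Union>C\<close> lies in a member of \<open>C\<close>. Hence so does the saturation of \<open>F\<close> (the
  intersection of its open supersets), which is open and so belongs to the lower set \<open>C\<close>.
  These saturations form a directed family with union \<open>\<Union>C\<close>, hence \<open>\<Union>C \<in> C\<close> and \<open>C\<close> is the
  closure of the point \<open>\<Union>C\<close>.\<close>

definition alexandrov_space :: "'a topology \<Rightarrow> bool" where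
  "alexandrov_space X \<longleftrightarrow>
     (\<forall>\<U>. \<U> \<noteq> {} \<and> (\<forall>U\<in>\<U>. openin X U) \<longrightarrow> openin X (\<Inter>\<U>))"

definition saturation :: "'a topology \<Rightarrow> 'a set \<Rightarrow> 'a set" where
  "saturation X F = \<Inter>{V. openin X V \<and> F \<subseteq> V}"

lemma alexandrov_spaceD:
  assumes "alexandrov_space X" and "\<U> \<noteq> {}" and "\<And>U. U \<in> \<U> \<Longrightarrow> openin X U"
  shows "openin X (\<Inter>\<U>)"
  using assms unfolding alexandrov_space_def by blast

lemma p_spaceD:
  assumes "p_space X" and "countable \<U>" and "\<U> \<noteq> {}" and "\<And>U. U \<in> \<U> \<Longrightarrow> openin X U"
  shows "openin X (\<Inter>\<U>)"
  using assms unfolding p_space_def by blast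

lemma countable_p_space_imp_alexandrov_space:
  assumes countable: "countable (topspace X)" and p: "p_space X"
  shows "alexandrov_space X"
  unfolding alexandrov_space_def
proof (intro allI impI)
  fix \<U> assume "\<U> \<noteq> {} \<and> (\<forall>U\<in>\<U>. openin X U)"
  then obtain U\<^sub>0 where U\<^sub>0: "U\<^sub>0 \<in> \<U>" and opens: "\<And>U. U \<in> \<U> \<Longrightarrow> openin X U" by blast
  have "\<forall>y\<in>topspace X - \<Inter>\<U>. \<exists>U. U \<in> \<U> \<and> y \<notin> U" by blast
  then obtain g where g: "\<And>y. y \<in> topspace X - \<Inter>\<U> \<Longrightarrow> g y \<in> \<U> \<and> y \<notin> g y"
    by (meson bchoice)
  define \<V> where "\<V> = insert U\<^sub>0 (g ` (topspace X - \<Inter>\<U>))"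
  have "\<V> \<subseteq> \<U>" unfolding \<V>_def using U\<^sub>0 g by auto
  have "\<Inter>\<V> = \<Inter>\<U>"
  proof
    show "\<Inter>\<U> \<subseteq> \<Inter>\<V>" using \<open>\<V> \<subseteq> \<U>\<close> by (rule Inter_anti_mono)
    show "\<Inter>\<V> \<subseteq> \<Inter>\<U>"
    proof
      fix y assume y: "y \<in> \<Inter>\<V>"
      then have "y \<in> topspace X"
        using openin_subset[OF opens[OF U\<^sub>0]] unfolding \<V>_def by auto
      show "y \<in> \<Inter>\<U>"
      proof (rule ccontr)
        assume "y \<notin> \<Inter>\<U>"
        then have "g y \<in> \<V>" and "y \<notin> g y" using g \<open>y \<in> topspace X\<close> unfolding \<V>_def by auto
        then show False using y by blast
      qed
    qed
  qed
  moreover have "openin X (\<Inter>\<V>)"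
  proof (rule p_spaceD[OF p])
    show "countable \<V>" unfolding \<V>_def using countable by simp
    show "\<V> \<noteq> {}" unfolding \<V>_def by simp
    show "\<And>U. U \<in> \<V> \<Longrightarrow> openin X U" using opens \<open>\<V> \<subseteq> \<U>\<close> by blast
  qed
  ultimately show "openin X (\<Inter>\<U>)" by simp
qed

lemma saturation_subset: "openin X V \<Longrightarrow> F \<subseteq> V \<Longrightarrow> saturation X F \<subseteq> V"
  unfolding saturation_def by blast

lemma subset_saturation: "F \<subseteq> topspace X \<Longrightarrow> F \<subseteq> saturation X F"
  unfolding saturation_def by blast

lemma saturation_mono: "F \<subseteq> G \<Longrightarrow> saturation X F \<subseteq> saturation X G"
  unfolding saturation_def by blast

lemma openin_saturation:
  assumes "alexandrov_space X" and "F \<subseteq> topspace X"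
  shows "openin X (saturation X F)"
proof -
  have "topspace X \<in> {V. openin X V \<and> F \<subseteq> V}" using assms(2) by simp
  then show ?thesis
    unfolding saturation_def by (intro alexandrov_spaceD[OF assms(1)]) auto
qed

lemma directed_opens_finite_upper_bound:
  assumes "directed_opens X D" and "finite G" and "G \<subseteq> D"
  shows "\<exists>C\<in>D. \<forall>A\<in>G. A \<subseteq> C"
  using assms(2,3)
proof (induction G rule: finite_induct)
  case empty
  then show ?case using assms(1) unfolding directed_opens_def by auto
next
  case (insert A G)
  then obtain C where C: "C \<in> D" "\<forall>B\<in>G. B \<subseteq> C" by auto
  obtain C' where "C' \<in> D" "A \<subseteq> C'" "C \<subseteq> C'"
    using assms(1) C(1) insert.prems unfolding directed_opens_def by blast
  then show ?case using C by blast
qed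

lemma scott_open_compactin_supersets:
  assumes "compactin X K"
  shows "scott_open X {V. openin X V \<and> K \<subseteq> V}"
  unfolding scott_open_def
proof (intro conjI allI impI)
  show "{V. openin X V \<and> K \<subseteq> V} \<subseteq> opens X" unfolding opens_def by auto
next
  fix U V assume "U \<in> {V. openin X V \<and> K \<subseteq> V} \<and> V \<in> opens X \<and> U \<subseteq> V"
  then show "V \<in> {V. openin X V \<and> K \<subseteq> V}" unfolding opens_def by auto
next
  fix D assume "directed_opens X D \<and> \<Union>D \<in> {V. openin X V \<and> K \<subseteq> V}"
  then have D: "directed_opens X D" and K: "K \<subseteq> \<Union>D" by auto
  have "\<forall>U\<in>D. openin X U" using D unfolding directed_opens_def opens_def by auto
  then obtain G where "finite G" "G \<subseteq> D" "K \<subseteq> \<Union>G"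
    using assms K unfolding compactin_def by meson
  moreover obtain C where "C \<in> D" "\<forall>A\<in>G. A \<subseteq> C"
    using directed_opens_finite_upper_bound[OF D \<open>finite G\<close> \<open>G \<subseteq> D\<close>] by blast
  moreover have "openin X C" using D \<open>C \<in> D\<close> unfolding directed_opens_def opens_def by auto
  ultimately show "D \<inter> {V. openin X V \<and> K \<subseteq> V} \<noteq> {}" by blast
qed

lemma topspace_scott_opens: "topspace (scott_opens X) = opens X"
proof -
  have "scott_open X (opens X)"
    unfolding scott_open_def directed_opens_def opens_def by auto
  then show ?thesis
    by (metis openin_scott_opens openin_subset openin_topspace scott_openD(1) subset_antisym)
qed

lemma scott_closed_subset_opens: "closedin (scott_opens X) C \<Longrightarrow> C \<subseteq> opens X"
  using closedin_subset topspace_scott_opens by blast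

lemma scott_open_complement:
  assumes "closedin (scott_opens X) C"
  shows "scott_open X (opens X - C)"
  using assms unfolding closedin_def topspace_scott_opens openin_scott_opens by blast

lemma scott_closed_lower:
  assumes C: "closedin (scott_opens X) C" and "W \<in> C" and "openin X V" and "V \<subseteq> W"
  shows "V \<in> C"
proof (rule ccontr)
  assume "V \<notin> C"
  have "W \<in> opens X" using scott_closed_subset_opens[OF C] \<open>W \<in> C\<close> by blast
  then have "W \<in> opens X - C"
    using scott_openD(2)[OF scott_open_complement[OF C]] assms(3,4) \<open>V \<notin> C\<close>
    unfolding opens_def by blast
  then show False using \<open>W \<in> C\<close> by blast
qed

lemma scott_closed_directed_Union:
  assumes C: "closedin (scott_opens X) C" and D: "directed_opens X D" and "D \<subseteq> C"
  shows "\<Union>D \<in> C"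
proof (rule ccontr)
  assume "\<Union>D \<notin> C"
  moreover have "openin X (\<Union>D)" using D unfolding directed_opens_def opens_def by auto
  ultimately have "\<Union>D \<in> opens X - C" unfolding opens_def by auto
  then obtain A where "A \<in> D" "A \<in> opens X - C"
    using scott_openD(3)[OF scott_open_complement[OF C] D] by blast
  then show False using \<open>D \<subseteq> C\<close> by blast
qed

lemma t0_space_scott_opens: "t0_space (scott_opens X)"
proof -
  have separate: "\<exists>S. openin (scott_opens X) S \<and> U \<in> S \<and> V \<notin> S"
    if "U \<in> opens X" "z \<in> U" "z \<notin> V" for U V z
  proof -
    let ?S = "{W. openin X W \<and> {z} \<subseteq> W}"
    have "compactin X {z}" using that openin_subset unfolding opens_def by auto
    then have "openin (scott_opens X) ?S"
      using scott_open_compactin_supersets openin_scott_opens by blast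
    moreover have "U \<in> ?S" "V \<notin> ?S" using that unfolding opens_def by auto
    ultimately show ?thesis by blast
  qed
  show ?thesis
    unfolding t0_space_def topspace_scott_opens
  proof (intro ballI impI)
    fix U V assume U: "U \<in> opens X" and V: "V \<in> opens X" and "U \<noteq> V"
    then obtain z where "z \<in> U \<and> z \<notin> V \<or> z \<in> V \<and> z \<notin> U" by blast
    then show "\<exists>S. openin (scott_opens X) S \<and> (U \<notin> S \<longleftrightarrow> V \<in> S)"
      using separate[OF U] separate[OF V] by metis
  qed
qed

lemma irreducible_closedD:
  assumes "irreducible_closed T C"
  shows "closedin T C" and "C \<noteq> {}"
  using assms unfolding irreducible_closed_def by simp_all

lemma irreducible_closed_Int_open:
  assumes C: "irreducible_closed T C" and P: "openin T P" and Q: "openin T Q"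
    and "P \<inter> C \<noteq> {}" and "Q \<inter> C \<noteq> {}"
  shows "P \<inter> Q \<inter> C \<noteq> {}"
proof
  assume "P \<inter> Q \<inter> C = {}"
  moreover have "C \<subseteq> topspace T" using closedin_subset[OF irreducible_closedD(1)[OF C]] .
  ultimately have "C \<subseteq> (topspace T - P) \<union> (topspace T - Q)" by blast
  moreover have "closedin T (topspace T - P)" and "closedin T (topspace T - Q)"
    using P Q by auto
  ultimately have "C \<subseteq> topspace T - P \<or> C \<subseteq> topspace T - Q"
    using C unfolding irreducible_closed_def by blast
  then show False using assms(4,5) by blast
qed

lemma irreducible_scott_closed_finite_subset:
  assumes C: "irreducible_closed (scott_opens X) C" and "finite F" and "F \<subseteq> \<Union>C"
  shows "\<exists>W\<in>C. F \<subseteq> W"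
  using assms(2,3)
proof (induction F rule: finite_induct)
  case empty
  then show ?case using irreducible_closedD(2)[OF C] by blast
next
  case (insert x F)
  let ?P = "{V. openin X V \<and> {x} \<subseteq> V}" and ?Q = "{V. openin X V \<and> F \<subseteq> V}"
  have "C \<subseteq> opens X" using scott_closed_subset_opens[OF irreducible_closedD(1)[OF C]] .
  then have "\<Union>C \<subseteq> topspace X" unfolding opens_def using openin_subset by blast
  then have "insert x F \<subseteq> topspace X" using insert.prems by (rule order_trans[rotated])
  then have "compactin X {x}" and "compactin X F"
    using insert.hyps(1) by (simp_all add: finite_imp_compactin)
  then have "openin (scott_opens X) ?P" and "openin (scott_opens X) ?Q"
    by (simp_all only: openin_scott_opens scott_open_compactin_supersets)
  moreover have "?P \<inter> C \<noteq> {}"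
  proof -
    obtain W where "W \<in> C" "x \<in> W" using insert.prems by blast
    then have "W \<in> ?P \<inter> C" using \<open>C \<subseteq> opens X\<close> unfolding opens_def by auto
    then show ?thesis by blast
  qed
  moreover have "?Q \<inter> C \<noteq> {}"
  proof -
    obtain W where "W \<in> C" "F \<subseteq> W" using insert.IH insert.prems by blast
    then have "W \<in> ?Q \<inter> C" using \<open>C \<subseteq> opens X\<close> unfolding opens_def by auto
    then show ?thesis by blast
  qed
  ultimately have "?P \<inter> ?Q \<inter> C \<noteq> {}" by (rule irreducible_closed_Int_open[OF C])
  then show ?case by blast
qed

lemma directed_opens_finite_saturations:
  assumes X: "alexandrov_space X" and S: "S \<subseteq> topspace X"
  shows "directed_opens X {saturation X F | F. finite F \<and> F \<subseteq> S}"
  unfolding directed_opens_def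
proof (intro conjI ballI)
  let ?D = "{saturation X F | F. finite F \<and> F \<subseteq> S}"
  show "?D \<subseteq> opens X" unfolding opens_def using openin_saturation[OF X] S by auto
  show "?D \<noteq> {}" by auto
  fix A B assume "A \<in> ?D" "B \<in> ?D"
  then obtain F G where "A = saturation X F" "B = saturation X G"
    and "finite F" "F \<subseteq> S" "finite G" "G \<subseteq> S"
    by blast
  moreover have "saturation X (F \<union> G) \<in> ?D" using calculation by auto
  moreover have "saturation X F \<union> saturation X G \<subseteq> saturation X (F \<union> G)"
    by (simp add: saturation_mono)
  ultimately show "\<exists>E\<in>?D. A \<subseteq> E \<and> B \<subseteq> E" by blast
qed

lemma Union_finite_saturations:
  assumes "openin X S"
  shows "\<Union>{saturation X F | F. finite F \<and> F \<subseteq> S} = S"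
proof
  show "\<Union>{saturation X F | F. finite F \<and> F \<subseteq> S} \<subseteq> S"
    using saturation_subset[OF assms] by auto
  show "S \<subseteq> \<Union>{saturation X F | F. finite F \<and> F \<subseteq> S}"
  proof
    fix y assume "y \<in> S"
    then have "y \<in> saturation X {y}"
      using subset_saturation[of "{y}" X] openin_subset[OF assms] by auto
    then show "y \<in> \<Union>{saturation X F | F. finite F \<and> F \<subseteq> S}" using \<open>y \<in> S\<close> by blast
  qed
qed

lemma alexandrov_irreducible_scott_closed_Union_mem:
  assumes X: "alexandrov_space X" and C: "irreducible_closed (scott_opens X) C"
  shows "\<Union>C \<in> C"
proof -
  have closed: "closedin (scott_opens X) C" using irreducible_closedD(1)[OF C] .
  have "C \<subseteq> opens X" using scott_closed_subset_opens[OF closed] .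
  then have open_Union: "openin X (\<Union>C)" and Union_sub: "\<Union>C \<subseteq> topspace X"
    unfolding opens_def using openin_subset by auto
  define D where "D = {saturation X F | F. finite F \<and> F \<subseteq> \<Union>C}"
  have "D \<subseteq> C"
  proof
    fix S assume "S \<in> D"
    then obtain F where S: "S = saturation X F" and F: "finite F" "F \<subseteq> \<Union>C"
      unfolding D_def by blast
    obtain W where "W \<in> C" "F \<subseteq> W"
      using irreducible_scott_closed_finite_subset[OF C F] by blast
    moreover have "openin X W" using \<open>W \<in> C\<close> \<open>C \<subseteq> opens X\<close> unfolding opens_def by blast
    ultimately show "S \<in> C"
      using scott_closed_lower[OF closed] openin_saturation[OF X] saturation_subset F Union_sub S
      by (meson order_trans)
  qed
  moreover have "directed_opens X D"
    unfolding D_def using directed_opens_finite_saturations[OF X Union_sub] .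
  moreover have "\<Union>D = \<Union>C" unfolding D_def using Union_finite_saturations[OF open_Union] .
  ultimately show ?thesis using scott_closed_directed_Union[OF closed] by metis
qed

lemma scott_closed_eq_closure_of_Union:
  assumes C: "closedin (scott_opens X) C" and "\<Union>C \<in> C"
  shows "C = scott_opens X closure_of {\<Union>C}"
proof
  show "scott_opens X closure_of {\<Union>C} \<subseteq> C"
    using closure_of_minimal[OF _ C] \<open>\<Union>C \<in> C\<close> by blast
  show "C \<subseteq> scott_opens X closure_of {\<Union>C}"
  proof
    fix W assume "W \<in> C"
    then have "openin X W" using scott_closed_subset_opens[OF C] unfolding opens_def by blast
    moreover have "\<Union>C \<in> scott_opens X closure_of {\<Union>C}"
      using closure_of_subset[of "{\<Union>C}" "scott_opens X"] closedin_subset[OF C] \<open>\<Union>C \<in> C\<close>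
      by auto
    ultimately show "W \<in> scott_opens X closure_of {\<Union>C}"
      using scott_closed_lower[OF closedin_closure_of] \<open>W \<in> C\<close> by blast
  qed
qed

lemma alexandrov_space_imp_sober_scott_opens:
  assumes "alexandrov_space X"
  shows "sober (scott_opens X)"
  unfolding sober_def
proof (intro conjI allI impI)
  show "t0_space (scott_opens X)" by (rule t0_space_scott_opens)
  fix C assume C: "irreducible_closed (scott_opens X) C"
  then have closed: "closedin (scott_opens X) C" by (rule irreducible_closedD(1))
  have "\<Union>C \<in> C" using alexandrov_irreducible_scott_closed_Union_mem[OF assms C] .
  then show "\<exists>U\<in>topspace (scott_opens X). C = scott_opens X closure_of {U}"
    using scott_closed_eq_closure_of_Union[OF closed] closedin_subset[OF closed] by blast
qed

theorem corollary4p7: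
  fixes X :: "'a topology"
  assumes "countable (topspace X)"
    and "p_space X"
  shows "sober (scott_opens X)"
  by (intro alexandrov_space_imp_sober_scott_opens countable_p_space_imp_alexandrov_space assms)

end
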